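(* In the system described in the context, there is only one installed view in the system at any time: if a view $w$ is installed in the system, then any previously installed view $v<w$ was uninstalled and will not be installed anymore.
   Context: Servers $S=\{s_1,\dots,s_n\}$ in an asynchronous crash-prone message-passing system with reliable links. Views form a sequence $v_0,v_1,\dots$ with $v_{k+1}=v_k.succ$; $v<w$ means $w$ is obtained from $v$ by applying $succ$ one or more times. Each server has a current view $s.cview$ (initially $v_0$) and a weight in each view. A weighted majority for view $v$ is a set of servers whose weights in $v$ sum to more than $n/2$. View changer run by each server $s$ with $s.cview=v$: when a local timeout for $v$ expires it sends $\langle\text{change\_view},v.succ\rangle$ to all servers; once it has received or sent change\_view for $v.succ$ it forwards it if not already sent, disables read/write operations, sends $\langle\text{state\_update},(val,ts,cid),v,w\rangle$ to all servers (its register state and weight $w$ in $v$) — at this point it has uninstalled $v$ — waits until it has state\_update messages for view $v$ whose weights sum to more than $n/2$, adopts the value with lexicographically largest $(ts,cid)$, then sets $s.cview\leftarrow v.succ$ (installs $v.succ$) and re-enables read/write operations. A view $v$ is installed in the system once at least one server installs $v$ and every server $s$ satisfies $s.cview\le v$; when $v.succ$ is installed, $v$ is said to be uninstalled from the system. *)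

theory Defs
  imports Complex_Main
begin

text \<open>Views v_0, v_1, ... are represented by natural numbers: v_k = k,
  v.succ = Suc v, and the view order v < w is the order on nat.
  Servers form a finite type 'srv, so n = card (UNIV :: 'srv set).
  A register state is a triple (val, ts, cid).\<close>

type_synonym 'val regstate = "'val \<times> nat \<times> nat"

datatype 'val msg =
    ChangeView nat                      \<comment> \<open>change_view, target view\<close>
  | StateUpdate "'val regstate" nat real \<comment> \<open>state_update (val,ts,cid), view v, weight w in v\<close>

record ('srv, 'val) lstate =
  cview :: nat
  reg :: "'val regstate"
  ops_enabled :: bool
  cv_sent :: "nat set"
  su_sent :: "nat set"        \<comment> \<open>views for which state_update was sent (= uninstalled locally)\<close>
  rcvd :: "('srv \<times> 'val msg) set"
  crashed :: bool

record ('srv, 'val) gstate =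
  local :: "'srv \<Rightarrow> ('srv, 'val) lstate"
  net :: "('srv \<times> 'srv \<times> 'val msg) set"  \<comment> \<open>sent messages (sender, receiver, msg)\<close>

definition broadcast :: "'srv \<Rightarrow> 'val msg \<Rightarrow> ('srv \<times> 'srv \<times> 'val msg) set" where
  "broadcast s m = {(s, r, m) | r. True}"

definition lex_le :: "nat \<times> nat \<Rightarrow> nat \<times> nat \<Rightarrow> bool" where
  "lex_le p q \<longleftrightarrow> fst p < fst q \<or> (fst p = fst q \<and> snd p \<le> snd q)"

definition init_state :: "('srv::finite, 'val) gstate \<Rightarrow> bool" where
  "init_state g \<longleftrightarrow> net g = {} \<and>
     (\<forall>s. cview (local g s) = 0 \<and> ops_enabled (local g s) \<and> cv_sent (local g s) = {}
          \<and> su_sent (local g s) = {} \<and> rcvd (local g s) = {} \<and> \<not> crashed (local g s))"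

text \<open>One atomic step of a (non-crashed) server s.  wt v s is the weight of s in view v.\<close>
inductive step :: "(nat \<Rightarrow> 'srv::finite \<Rightarrow> real) \<Rightarrow> ('srv, 'val) gstate \<Rightarrow> ('srv, 'val) gstate \<Rightarrow> bool"
  for wt where
  timeout: "\<not> crashed (local g s) \<Longrightarrow> L = local g s \<Longrightarrow>
    step wt g \<lparr>local = (local g)(s := L\<lparr>cv_sent := insert (Suc (cview L)) (cv_sent L)\<rparr>),
               net = net g \<union> broadcast s (ChangeView (Suc (cview L)))\<rparr>"
  \<comment> \<open>reliable links: a sent message may be delivered to its receiver\<close>
| receive: "\<not> crashed (local g s) \<Longrightarrow> (s', s, m) \<in> net g \<Longrightarrow> L = local g s \<Longrightarrow>
    step wt g \<lparr>local = (local g)(s := L\<lparr>rcvd := insert (s', m) (rcvd L)\<rparr>), net = net g\<rparr>"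
| uninstall: "\<not> crashed (local g s) \<Longrightarrow> L = local g s \<Longrightarrow> v = cview L \<Longrightarrow> v \<notin> su_sent L \<Longrightarrow>
    Suc v \<in> cv_sent L \<or> (\<exists>s'. (s', ChangeView (Suc v)) \<in> rcvd L) \<Longrightarrow>
    step wt g \<lparr>local = (local g)(s := L\<lparr>cv_sent := insert (Suc v) (cv_sent L),
                                        ops_enabled := False,
                                        su_sent := insert v (su_sent L)\<rparr>),
               net = net g \<union> (if Suc v \<in> cv_sent L then {} else broadcast s (ChangeView (Suc v)))
                       \<union> broadcast s (StateUpdate (reg L) v (wt v s))\<rparr>"
| install: "\<not> crashed (local g s) \<Longrightarrow> L = local g s \<Longrightarrow> v = cview L \<Longrightarrow> v \<in> su_sent L \<Longrightarrow>
    finite M \<Longrightarrow> M \<subseteq> {(s', x, w). (s', StateUpdate x v w) \<in> rcvd L} \<Longrightarrow> inj_on fst M \<Longrightarrow>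
    (\<Sum>(_, _, w)\<in>M. w) > real (card (UNIV :: 'srv set)) / 2 \<Longrightarrow>
    (s0, x0, w0) \<in> M \<Longrightarrow> (\<forall>(s1, x1, w1)\<in>M. lex_le (snd x1) (snd x0)) \<Longrightarrow>
    step wt g \<lparr>local = (local g)(s := L\<lparr>reg := x0, cview := Suc v, ops_enabled := True\<rparr>),
               net = net g\<rparr>"
  \<comment> \<open>read/write operations (abstracted): only while enabled, may change the register state\<close>
| client_op: "\<not> crashed (local g s) \<Longrightarrow> L = local g s \<Longrightarrow> ops_enabled L \<Longrightarrow>
    step wt g \<lparr>local = (local g)(s := L\<lparr>reg := x\<rparr>), net = net g\<rparr>"
| crash: "L = local g s \<Longrightarrow>
    step wt g \<lparr>local = (local g)(s := L\<lparr>crashed := True\<rparr>), net = net g\<rparr>"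

text \<open>An execution: a sequence of global states starting in the initial state,
  each transition is a step or a stutter (for finite runs).\<close>
definition execution :: "(nat \<Rightarrow> 'srv::finite \<Rightarrow> real) \<Rightarrow> (nat \<Rightarrow> ('srv, 'val) gstate) \<Rightarrow> bool" where
  "execution wt ex \<longleftrightarrow> init_state (ex 0) \<and>
     (\<forall>i. step wt (ex i) (ex (Suc i)) \<or> ex (Suc i) = ex i)"

definition server_installed :: "(nat \<Rightarrow> ('srv, 'val) gstate) \<Rightarrow> nat \<Rightarrow> 'srv \<Rightarrow> nat \<Rightarrow> bool" where
  "server_installed ex t s v \<longleftrightarrow> (\<exists>t'\<le>t. cview (local (ex t') s) = v)"

definition sys_installed :: "(nat \<Rightarrow> ('srv, 'val) gstate) \<Rightarrow> nat \<Rightarrow> nat \<Rightarrow> bool" where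
  "sys_installed ex t v \<longleftrightarrow> (\<exists>s. server_installed ex t s v) \<and> (\<forall>s. cview (local (ex t) s) \<le> v)"

definition sys_uninstalled :: "(nat \<Rightarrow> ('srv, 'val) gstate) \<Rightarrow> nat \<Rightarrow> nat \<Rightarrow> bool" where
  "sys_uninstalled ex t v \<longleftrightarrow> sys_installed ex t (Suc v)"

end

theory Submission
  imports Defs
begin

text \<open>Because current views only grow, and by at most one per step, a view is installed in the
  system at time t exactly when it is the largest current view of all servers at t.  That maximum
  is itself non-decreasing and grows by at most one per step, so it is unique at each time, it
  passes through v.succ on its way from v to any larger w, and it never returns to v.\<close>

lemma step_cview_bounds:
  assumes "step wt g g'"
  shows "cview (local g s) \<le> cview (local g' s) \<and> cview (local g' s) \<le> Suc (cview (local g s))"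
  using assms by (cases rule: step.cases) auto

lemma execution_cview_Suc_bounds:
  assumes "execution wt ex"
  shows "cview (local (ex t) s) \<le> cview (local (ex (Suc t)) s) \<and>
         cview (local (ex (Suc t)) s) \<le> Suc (cview (local (ex t) s))"
proof -
  have "step wt (ex t) (ex (Suc t)) \<or> ex (Suc t) = ex t"
    using assms unfolding execution_def by blast
  then show ?thesis using step_cview_bounds by fastforce
qed

lemma execution_cview_mono:
  assumes "execution wt ex" "t1 \<le> t2"
  shows "cview (local (ex t1) s) \<le> cview (local (ex t2) s)"
  using lift_Suc_mono_le[of "\<lambda>t. cview (local (ex t) s)"] execution_cview_Suc_bounds[OF assms(1)] assms(2)
  by blast

definition max_cview :: "(nat \<Rightarrow> ('srv::finite, 'val) gstate) \<Rightarrow> nat \<Rightarrow> nat" where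
  "max_cview ex t = Max (range (\<lambda>s. cview (local (ex t) s)))"

lemma cview_le_max_cview: "cview (local (ex t) s) \<le> max_cview ex t"
  unfolding max_cview_def by simp

lemma max_cview_attained: "\<exists>s. cview (local (ex t) s) = max_cview ex t"
proof -
  have "Max (range (\<lambda>s. cview (local (ex t) s))) \<in> range (\<lambda>s. cview (local (ex t) s))"
    by (rule Max_in) simp_all
  then show ?thesis unfolding max_cview_def by (metis rangeE)
qed

lemma max_cview_le_iff: "max_cview ex t \<le> v \<longleftrightarrow> (\<forall>s. cview (local (ex t) s) \<le> v)"
  unfolding max_cview_def by simp

lemma sys_installed_iff_max_cview:
  assumes "execution wt ex"
  shows "sys_installed ex t v \<longleftrightarrow> v = max_cview ex t"
proof
  assume inst: "sys_installed ex t v"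
  then obtain s t' where "t' \<le> t" "cview (local (ex t') s) = v"
    unfolding sys_installed_def server_installed_def by blast
  then have "v \<le> max_cview ex t"
    using execution_cview_mono[OF assms] cview_le_max_cview order_trans by metis
  moreover have "max_cview ex t \<le> v"
    using inst unfolding sys_installed_def max_cview_le_iff by blast
  ultimately show "v = max_cview ex t" by simp
next
  assume "v = max_cview ex t"
  then show "sys_installed ex t v"
    unfolding sys_installed_def server_installed_def
    using max_cview_attained cview_le_max_cview by blast
qed

lemma max_cview_mono:
  assumes "execution wt ex" "t1 \<le> t2"
  shows "max_cview ex t1 \<le> max_cview ex t2"
  unfolding max_cview_le_iff
  using execution_cview_mono[OF assms] cview_le_max_cview order_trans by blast

lemma max_cview_Suc_le:
  assumes "execution wt ex"
  shows "max_cview ex (Suc t) \<le> Suc (max_cview ex t)"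
  unfolding max_cview_le_iff
  using execution_cview_Suc_bounds[OF assms] cview_le_max_cview by (meson Suc_le_mono order_trans)

lemma max_cview_passes_through:
  assumes "execution wt ex" "t1 \<le> t2" "max_cview ex t1 \<le> v" "v \<le> max_cview ex t2"
  obtains t where "t1 \<le> t" "t \<le> t2" "max_cview ex t = v"
proof -
  have "\<bar>int (max_cview ex (Suc t)) - int (max_cview ex t)\<bar> \<le> 1" for t
    using max_cview_mono[OF assms(1), of t "Suc t"] max_cview_Suc_le[OF assms(1), of t] by simp
  then show ?thesis
    using nat_intermed_int_val[of t1 t2 "\<lambda>t. int (max_cview ex t)" "int v"] assms(2-4) that
    by auto
qed

theorem lemma2:
  fixes wt :: "nat \<Rightarrow> 'srv::finite \<Rightarrow> real"
    and ex :: "nat \<Rightarrow> ('srv, 'val) gstate"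
  assumes "execution wt ex"
  shows "(\<forall>t v w. sys_installed ex t v \<and> sys_installed ex t w \<longrightarrow> v = w) \<and>
         (\<forall>t w t' v. sys_installed ex t w \<and> t' \<le> t \<and> sys_installed ex t' v \<and> v < w \<longrightarrow>
            (\<exists>t''. t' \<le> t'' \<and> t'' \<le> t \<and> sys_uninstalled ex t'' v) \<and>
            (\<forall>t''\<ge>t. \<not> sys_installed ex t'' v))"
proof -
  note installed_iff = sys_installed_iff_max_cview[OF assms]
  have "(\<exists>t''. t' \<le> t'' \<and> t'' \<le> t \<and> sys_uninstalled ex t'' v) \<and>
        (\<forall>t''\<ge>t. \<not> sys_installed ex t'' v)"
    if "sys_installed ex t w" "t' \<le> t" "sys_installed ex t' v" "v < w" for t w t' v
  proof
    have "max_cview ex t' = v" "max_cview ex t = w"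
      using that installed_iff by simp_all
    then obtain t'' where "t' \<le> t''" "t'' \<le> t" "max_cview ex t'' = Suc v"
      using max_cview_passes_through[OF assms \<open>t' \<le> t\<close>, of "Suc v"] \<open>v < w\<close> by auto
    then show "\<exists>t''. t' \<le> t'' \<and> t'' \<le> t \<and> sys_uninstalled ex t'' v"
      unfolding sys_uninstalled_def installed_iff by auto
    show "\<forall>t''\<ge>t. \<not> sys_installed ex t'' v"
      using max_cview_mono[OF assms, of t] \<open>max_cview ex t = w\<close> \<open>v < w\<close>
      unfolding installed_iff by fastforce
  qed
  then show ?thesis using installed_iff by auto
qed

end
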